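(* With $\mathcal{L}^\ddagger$, $\Gamma_T$, $\Gamma_L$ as defined below and $\Gamma=2\Gamma_T+\Gamma_L$, if $e^{t\mathcal{L}^\ddagger}$ is a unital Schwarz map for every $t\ge 0$, then $\Gamma_T\le\frac23\Gamma$ and $\Gamma_L\le\frac23\Gamma$; in particular $4\Gamma_T\ge\Gamma_L$.
   Context: For $\omega,\gamma_+,\gamma_-,\gamma_z\in\mathbb{R}$, $\mathcal{L}^\ddagger:\mathcal{M}_2\to\mathcal{M}_2$ is $\mathcal{L}^\ddagger(X)=\tfrac{i\omega}{2}[\sigma_z,X]+\gamma_+(\sigma_-X\sigma_+-\tfrac12\{\sigma_-\sigma_+,X\})+\gamma_-(\sigma_+X\sigma_--\tfrac12\{\sigma_+\sigma_-,X\})+\gamma_z(\sigma_zX\sigma_z-X)$, where $\sigma_x,\sigma_y,\sigma_z$ are the Pauli matrices and $\sigma_\pm=\frac12(\sigma_x\pm i\sigma_y)$. $\Gamma_T=\frac{\gamma_++\gamma_-}{2}+2\gamma_z$, $\Gamma_L=\gamma_++\gamma_-$. A unital Schwarz map on $\mathcal{M}_n$ is a linear map $\Phi$ with $\Phi(\mathbb{1})=\mathbb{1}$ and $\Phi(X^\dagger X)\ge\Phi(X)^\dagger\Phi(X)$ for all $X$. *)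

theory Defs
  imports "HOL-Analysis.Analysis"
begin

type_synonym mat2 = "complex ^ 2 ^ 2"

definition m2 :: "complex \<Rightarrow> complex \<Rightarrow> complex \<Rightarrow> complex \<Rightarrow> mat2" where
  "m2 a b c d = (\<chi> i j. if i = 0 then (if j = 0 then a else b) else (if j = 0 then c else d))"

definition sigma_x :: mat2 where "sigma_x = m2 0 1 1 0"
definition sigma_y :: mat2 where "sigma_y = m2 0 (-\<i>) \<i> 0"
definition sigma_z :: mat2 where "sigma_z = m2 1 0 0 (-1)"
definition sigma_plus :: mat2 where "sigma_plus = (\<chi> i j. (sigma_x $ i $ j + \<i> * sigma_y $ i $ j) / 2)"
definition sigma_minus :: mat2 where "sigma_minus = (\<chi> i j. (sigma_x $ i $ j - \<i> * sigma_y $ i $ j) / 2)"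

definition adj :: "mat2 \<Rightarrow> mat2" where "adj A = (\<chi> i j. cnj (A $ j $ i))"
definition csmult :: "complex \<Rightarrow> mat2 \<Rightarrow> mat2" where "csmult c A = (\<chi> i j. c * A $ i $ j)"

definition comm :: "mat2 \<Rightarrow> mat2 \<Rightarrow> mat2" where "comm A B = A ** B - B ** A"
definition acomm :: "mat2 \<Rightarrow> mat2 \<Rightarrow> mat2" where "acomm A B = A ** B + B ** A"

definition psd :: "mat2 \<Rightarrow> bool" where
  "psd A = (\<forall>v :: complex ^ 2. let q = (\<Sum>i\<in>UNIV. cnj (v $ i) * (A *v v) $ i) in Im q = 0 \<and> Re q \<ge> 0)"

definition loewner_ge :: "mat2 \<Rightarrow> mat2 \<Rightarrow> bool" where
  "loewner_ge A B = psd (A - B)"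

definition clinear_map :: "(mat2 \<Rightarrow> mat2) \<Rightarrow> bool" where
  "clinear_map \<Phi> = ((\<forall>X Y. \<Phi> (X + Y) = \<Phi> X + \<Phi> Y) \<and> (\<forall>c X. \<Phi> (csmult c X) = csmult c (\<Phi> X)))"

definition unital_schwarz :: "(mat2 \<Rightarrow> mat2) \<Rightarrow> bool" where
  "unital_schwarz \<Phi> = (clinear_map \<Phi> \<and> \<Phi> (mat 1) = mat 1 \<and>
     (\<forall>X. loewner_ge (\<Phi> (adj X ** X)) (adj (\<Phi> X) ** \<Phi> X)))"

definition Ldag :: "real \<Rightarrow> real \<Rightarrow> real \<Rightarrow> real \<Rightarrow> mat2 \<Rightarrow> mat2" where
  "Ldag \<omega> gp gm gz X =
     csmult (\<i> * \<omega> / 2) (comm sigma_z X)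
   + csmult gp (sigma_minus ** X ** sigma_plus - csmult (1/2) (acomm (sigma_minus ** sigma_plus) X))
   + csmult gm (sigma_plus ** X ** sigma_minus - csmult (1/2) (acomm (sigma_plus ** sigma_minus) X))
   + csmult gz (sigma_z ** X ** sigma_z - X)"

definition sexp :: "real \<Rightarrow> (mat2 \<Rightarrow> mat2) \<Rightarrow> mat2 \<Rightarrow> mat2" where
  "sexp t L X = (\<Sum>n. (t ^ n / fact n) *\<^sub>R (L ^^ n) X)"

definition Gamma_T :: "real \<Rightarrow> real \<Rightarrow> real \<Rightarrow> real" where
  "Gamma_T gp gm gz = (gp + gm) / 2 + 2 * gz"
definition Gamma_L :: "real \<Rightarrow> real \<Rightarrow> real" where
  "Gamma_L gp gm = gp + gm"

end

theory Submission
  imports Defs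
begin

text \<open>The off-diagonal matrix units E12, E21 are eigenvectors of the generator with
  eigenvalues \<plusminus>i\<omega> - \<Gamma>_T, and E12\<dagger>E12 = E22, E21\<dagger>E21 = E11. Hence the Schwarz inequality
  for \<Phi>_t = e^(tL) gives \<Phi>_t(E_kk) \<ge> e^(-2t\<Gamma>_T) E_kk. The diagonals of \<Phi>_t(E_kk) are explicit:
  \<Phi>_t(E22) = diag(\<phi>(t)\<gamma>_-, 1 - \<phi>(t)\<gamma>_+) and \<Phi>_t(E11) = diag(1 - \<phi>(t)\<gamma>_-, \<phi>(t)\<gamma>_+),
  where \<phi>(t) = \<integral>_0^t e^(-s\<Gamma>_L) ds > 0. This forces \<gamma>_\<plusminus> \<ge> 0, and since \<phi>(t) = t + o(t),
  comparing first-order terms at t = 0 forces \<gamma>_\<plusminus> \<le> 2\<Gamma>_T.\<close>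

lemma exhaust_2: "(i::2) = 0 \<or> i = 1"
proof (induct i)
  case (of_int z)
  then have "z = 0 \<or> z = 1" by fastforce
  then show ?case by auto
qed

lemma sum_UNIV_2: "sum f (UNIV::2 set) = f 0 + f 1"
proof -
  have "(UNIV::2 set) = {0,1}" using exhaust_2 by auto
  then have "sum f (UNIV::2 set) = sum f {0,1}" by simp
  then show ?thesis by simp
qed

lemma all_2: "(\<forall>i::2. P i) \<longleftrightarrow> P 0 \<and> P 1"
  using exhaust_2 by metis

lemma mat2_eq_iff: "(A::mat2) = B \<longleftrightarrow> A$0$0 = B$0$0 \<and> A$0$1 = B$0$1 \<and> A$1$0 = B$1$0 \<and> A$1$1 = B$1$1"
  by (auto simp: vec_eq_iff all_2)

lemma m2_nth [simp]:
  "m2 a b c d $ 0 $ 0 = a" "m2 a b c d $ 0 $ 1 = b" "m2 a b c d $ 1 $ 0 = c" "m2 a b c d $ 1 $ 1 = d"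
  by (simp_all add: m2_def)

lemma matrix_mult_nth [simp]: "((A::mat2) ** B) $ i $ j = A$i$0 * B$0$j + A$i$1 * B$1$j"
  by (simp add: matrix_matrix_mult_def sum_UNIV_2)

lemma csmult_nth [simp]: "csmult c A $ i $ j = c * A $ i $ j"
  by (simp add: csmult_def)

lemma adj_nth [simp]: "adj A $ i $ j = cnj (A $ j $ i)"
  by (simp add: adj_def)

lemma sigma_nth [simp]:
  "sigma_plus $ 0 $ 0 = 0" "sigma_plus $ 0 $ 1 = 1" "sigma_plus $ 1 $ 0 = 0" "sigma_plus $ 1 $ 1 = 0"
  "sigma_minus $ 0 $ 0 = 0" "sigma_minus $ 0 $ 1 = 0" "sigma_minus $ 1 $ 0 = 1" "sigma_minus $ 1 $ 1 = 0"
  "sigma_z $ 0 $ 0 = 1" "sigma_z $ 0 $ 1 = 0" "sigma_z $ 1 $ 0 = 0" "sigma_z $ 1 $ 1 = -1"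
  by (simp_all add: sigma_x_def sigma_y_def sigma_z_def sigma_plus_def sigma_minus_def)

lemma sums_csmult:
  assumes "a sums s"
  shows "(\<lambda>n. csmult (a n) Y) sums csmult s Y"
proof -
  have "(\<lambda>n. csmult (a n) Y $ i $ j) sums (csmult s Y $ i $ j)" for i j
    using sums_mult2[OF assms] by simp
  then show ?thesis
    unfolding sums_def by (auto intro!: vec_tendstoI)
qed

text \<open>\<integral>_0^t e^(sc) ds, with the limiting value t at c = 0.\<close>
definition exp_integral :: "'a::{real_normed_field,banach} \<Rightarrow> real \<Rightarrow> 'a" where
  "exp_integral c t = (if c = 0 then of_real t else (exp (of_real t * c) - 1) / c)"

lemma sums_exp_integral:
  fixes c :: "'a::{real_normed_field,banach}"
  shows "(\<lambda>n. (t ^ Suc n / fact (Suc n)) *\<^sub>R c ^ n) sums exp_integral c t"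
proof (cases "c = 0")
  case True
  have "(\<lambda>n. (t ^ Suc n / fact (Suc n)) *\<^sub>R c ^ n) = (\<lambda>n. if n = 0 then of_real t else 0)"
    using True by (auto simp: scaleR_conv_of_real)
  then show ?thesis
    using True sums_single[of 0 "\<lambda>_. of_real t"] by (simp add: exp_integral_def)
next
  case False
  let ?f = "\<lambda>n. (of_real t * c) ^ n /\<^sub>R fact n"
  have "(\<lambda>n. ?f (Suc n)) sums (exp (of_real t * c) - 1)"
  proof (rule sums_Suc_iff[of ?f, THEN iffD2])
    show "?f sums (exp (of_real t * c) - 1 + ?f 0)"
      using exp_converges[of "of_real t * c"] by simp
  qed
  then have "(\<lambda>n. ?f (Suc n) / c) sums exp_integral c t"
    using False by (simp add: exp_integral_def sums_divide)
  moreover have "?f (Suc n) / c = (t ^ Suc n / fact (Suc n)) *\<^sub>R c ^ n" for n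
    using False by (simp add: scaleR_conv_of_real power_mult_distrib field_simps del: fact_Suc)
  ultimately show ?thesis by simp
qed

lemma exp_integral_times: "c * exp_integral c t = exp (of_real t * c) - 1"
  by (cases "c = 0") (simp_all add: exp_integral_def)

lemma exp_integral_of_real: "exp_integral (of_real c) t = of_real (exp_integral c t)"
  by (simp add: exp_integral_def exp_of_real[symmetric])

lemma exp_integral_pos:
  fixes c :: real
  assumes "t > 0"
  shows "exp_integral c t > 0"
  using assms by (auto simp: exp_integral_def zero_less_divide_iff zero_less_mult_iff mult_less_0_iff)

lemma exp_integral_zero [simp]: "exp_integral c 0 = 0"
  by (simp add: exp_integral_def)

lemma has_real_derivative_exp_integral: "(exp_integral (c::real) has_real_derivative 1) (at 0)"
proof (cases "c = 0")
  case True
  then show ?thesis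
    by (simp add: exp_integral_def[abs_def] DERIV_ident)
next
  case False
  have "((\<lambda>t. (exp (t * c) - 1) / c) has_real_derivative exp (0 * c) * c / c) (at 0)"
    using False by (intro derivative_eq_intros) auto
  then show ?thesis
    using False by (simp add: exp_integral_def[abs_def])
qed

lemma DERIV_nonneg_at_right_min:
  fixes f :: "real \<Rightarrow> real"
  assumes "(f has_real_derivative l) (at x)" and "\<And>h. h > 0 \<Longrightarrow> f x \<le> f (x + h)"
  shows "l \<ge> 0"
proof (rule ccontr)
  assume "\<not> l \<ge> 0"
  then obtain d where "d > 0" and "\<forall>h>0. h < d \<longrightarrow> f x > f (x + h)"
    using DERIV_neg_dec_right[OF assms(1)] by auto
  then have "f x > f (x + d / 2)" by simp
  with assms(2)[of "d / 2"] \<open>d > 0\<close> show False by simp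
qed

lemma funpow_Jordan_chain:
  assumes hom: "\<And>a Z. L (csmult a Z) = csmult a (L Z)"
    and "L X = Y" "L Y = csmult c Y"
  shows "(L ^^ Suc n) X = csmult (c ^ n) Y"
proof (induction n)
  case 0
  then show ?case using assms(2) by (simp add: mat2_eq_iff)
next
  case (Suc n)
  then have "(L ^^ Suc (Suc n)) X = csmult (c ^ n) (csmult c Y)"
    using hom assms(3) by simp
  then show ?case by (simp add: mat2_eq_iff)
qed

lemma sexp_Jordan_chain:
  assumes "\<And>a Z. L (csmult a Z) = csmult a (L Z)"
    and "L X = Y" "L Y = csmult c Y"
  shows "sexp t L X = X + csmult (exp_integral c t) Y"
proof -
  let ?f = "\<lambda>n. (t ^ n / fact n) *\<^sub>R (L ^^ n) X"
  have "?f (Suc n) = csmult ((t ^ Suc n / fact (Suc n)) *\<^sub>R c ^ n) Y" for n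
    unfolding funpow_Jordan_chain[OF assms] by (simp add: mat2_eq_iff vector_scaleR_component)
  then have "(\<lambda>n. ?f (Suc n)) sums csmult (exp_integral c t) Y"
    using sums_csmult[OF sums_exp_integral] by simp
  then have "?f sums (csmult (exp_integral c t) Y + ?f 0)"
    by (rule sums_Suc_iff[of ?f, THEN iffD1])
  then show ?thesis
    unfolding sexp_def by (simp add: sums_iff add.commute)
qed

lemma sexp_eigenvector:
  assumes "\<And>a Z. L (csmult a Z) = csmult a (L Z)" and "L X = csmult c X"
  shows "sexp t L X = csmult (exp (of_real t * c)) X"
proof -
  have "L (csmult c X) = csmult c (csmult c X)"
    using assms by simp
  then have "sexp t L X = X + csmult (exp_integral c t) (csmult c X)"
    using sexp_Jordan_chain[OF assms(1)] assms(2) by blast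
  also have "\<dots> = csmult (1 + c * exp_integral c t) X"
    by (simp add: mat2_eq_iff algebra_simps)
  finally show ?thesis
    by (simp add: exp_integral_times)
qed

lemma loewner_ge_diag:
  assumes "loewner_ge A B"
  shows "Re (B $ k $ k) \<le> Re (A $ k $ k)"
proof -
  define v :: "complex ^ 2" where "v = (\<chi> i. if i = k then 1 else 0)"
  have "(\<Sum>i\<in>UNIV. cnj (v $ i) * ((A - B) *v v) $ i) = (A - B) $ k $ k"
    using exhaust_2[of k] by (auto simp: v_def matrix_vector_mult_def sum_UNIV_2)
  with assms have "0 \<le> Re ((A - B) $ k $ k)"
    unfolding loewner_ge_def psd_def Let_def by metis
  then show ?thesis by simp
qed

lemma schwarz_eigenvector:
  assumes "unital_schwarz (sexp t L)"
    and "\<And>a Z. L (csmult a Z) = csmult a (L Z)" and "L X = csmult c X"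
  shows "loewner_ge (sexp t L (adj X ** X)) (csmult (exp (2 * t * Re c)) (adj X ** X))"
proof -
  let ?e = "exp (of_real t * c)"
  have "adj (sexp t L X) ** sexp t L X = csmult (cnj ?e * ?e) (adj X ** X)"
    unfolding sexp_eigenvector[OF assms(2,3)] by (simp add: mat2_eq_iff algebra_simps)
  also have "cnj ?e * ?e = exp (of_real t * cnj c + of_real t * c)"
    by (simp add: exp_cnj exp_add)
  also have "\<dots> = exp (2 * t * Re c)"
  proof -
    have "of_real t * cnj c + of_real t * c = complex_of_real (2 * t * Re c)"
      by (simp add: complex_eq_iff)
    then show ?thesis by (metis exp_of_real)
  qed
  finally show ?thesis
    using assms(1) unfolding unital_schwarz_def by metis
qed

lemma Ldag_nth:
  "Ldag w gp gm gz X $ 0 $ 0 = gm * (X$1$1 - X$0$0)"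
  "Ldag w gp gm gz X $ 0 $ 1 = (\<i> * w - Gamma_T gp gm gz) * X$0$1"
  "Ldag w gp gm gz X $ 1 $ 0 = (- \<i> * w - Gamma_T gp gm gz) * X$1$0"
  "Ldag w gp gm gz X $ 1 $ 1 = gp * (X$0$0 - X$1$1)"
  by (simp_all add: Ldag_def comm_def acomm_def Gamma_T_def algebra_simps)

lemma Ldag_csmult: "Ldag w gp gm gz (csmult a X) = csmult a (Ldag w gp gm gz X)"
  by (simp add: mat2_eq_iff Ldag_nth algebra_simps)

text \<open>The generator maps E22 \<mapsto> D \<mapsto> -\<Gamma>_L D with D = diag(\<gamma>_-, -\<gamma>_+), and E11 \<mapsto> -D.\<close>

lemma sexp_Ldag_E22:
  "sexp t (Ldag w gp gm gz) (m2 0 0 0 1)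
     = m2 0 0 0 1 + csmult (exp_integral (- (gp + gm)) t) (m2 gm 0 0 (- gp))"
proof -
  have "sexp t (Ldag w gp gm gz) (m2 0 0 0 1)
          = m2 0 0 0 1 + csmult (exp_integral (complex_of_real (- (gp + gm))) t) (m2 gm 0 0 (- gp))"
    by (rule sexp_Jordan_chain[of "Ldag w gp gm gz", OF Ldag_csmult])
      (simp_all add: mat2_eq_iff Ldag_nth algebra_simps)
  then show ?thesis by (simp only: exp_integral_of_real)
qed

lemma sexp_Ldag_E11:
  "sexp t (Ldag w gp gm gz) (m2 1 0 0 0)
     = m2 1 0 0 0 + csmult (exp_integral (- (gp + gm)) t) (m2 (- gm) 0 0 gp)"
proof -
  have "sexp t (Ldag w gp gm gz) (m2 1 0 0 0)
          = m2 1 0 0 0 + csmult (exp_integral (complex_of_real (- (gp + gm))) t) (m2 (- gm) 0 0 gp)"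
    by (rule sexp_Jordan_chain[of "Ldag w gp gm gz", OF Ldag_csmult])
      (simp_all add: mat2_eq_iff Ldag_nth algebra_simps)
  then show ?thesis by (simp only: exp_integral_of_real)
qed

lemma Ldag_schwarz_population_bounds:
  assumes "unital_schwarz (sexp t (Ldag w gp gm gz))"
  defines "\<phi> \<equiv> exp_integral (- (gp + gm)) t"
  shows "0 \<le> \<phi> * gm" "exp (- 2 * t * Gamma_T gp gm gz) \<le> 1 - \<phi> * gp"
    and "0 \<le> \<phi> * gp" "exp (- 2 * t * Gamma_T gp gm gz) \<le> 1 - \<phi> * gm"
proof -
  let ?L = "Ldag w gp gm gz" and ?T = "Gamma_T gp gm gz"
  have "?L (m2 0 1 0 0) = csmult (\<i> * w - ?T) (m2 0 1 0 0)"
    by (simp add: mat2_eq_iff Ldag_nth)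
  from schwarz_eigenvector[OF assms(1) Ldag_csmult this]
  have E22: "loewner_ge (sexp t ?L (m2 0 0 0 1)) (csmult (exp (- 2 * t * ?T)) (m2 0 0 0 1))"
    using mat2_eq_iff[of "adj (m2 0 1 0 0) ** m2 0 1 0 0" "m2 0 0 0 1"] by simp
  have "?L (m2 0 0 1 0) = csmult (- \<i> * w - ?T) (m2 0 0 1 0)"
    by (simp add: mat2_eq_iff Ldag_nth)
  from schwarz_eigenvector[OF assms(1) Ldag_csmult this]
  have E11: "loewner_ge (sexp t ?L (m2 1 0 0 0)) (csmult (exp (- 2 * t * ?T)) (m2 1 0 0 0))"
    using mat2_eq_iff[of "adj (m2 0 0 1 0) ** m2 0 0 1 0" "m2 1 0 0 0"] by simp
  show "0 \<le> \<phi> * gm" "exp (- 2 * t * ?T) \<le> 1 - \<phi> * gp"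
    using loewner_ge_diag[OF E22, of 0] loewner_ge_diag[OF E22, of 1]
    by (simp_all add: sexp_Ldag_E22 \<phi>_def)
  show "0 \<le> \<phi> * gp" "exp (- 2 * t * ?T) \<le> 1 - \<phi> * gm"
    using loewner_ge_diag[OF E11, of 0] loewner_ge_diag[OF E11, of 1]
    by (simp_all add: sexp_Ldag_E11 \<phi>_def)
qed

lemma rate_le_of_exp_bound:
  fixes \<phi> :: "real \<Rightarrow> real"
  assumes "\<phi> 0 = 0" and "(\<phi> has_real_derivative 1) (at 0)"
    and "\<And>t. t > 0 \<Longrightarrow> exp (- 2 * t * T) \<le> 1 - \<phi> t * g"
  shows "g \<le> 2 * T"
proof -
  let ?f = "\<lambda>t. 1 - \<phi> t * g - exp (- 2 * t * T)"
  have "(?f has_real_derivative 2 * T - g) (at 0)"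
    using assms(2) by (auto intro!: derivative_eq_intros)
  moreover have "?f 0 \<le> ?f (0 + t)" if "t > 0" for t
    using assms(1) assms(3)[OF that] by simp
  ultimately have "2 * T - g \<ge> 0"
    by (rule DERIV_nonneg_at_right_min)
  then show ?thesis by simp
qed

theorem mainTheorem10:
  fixes \<omega> gp gm gz :: real
  assumes "\<forall>t\<ge>0. unital_schwarz (sexp t (Ldag \<omega> gp gm gz))"
  shows "Gamma_T gp gm gz \<le> 2/3 * (2 * Gamma_T gp gm gz + Gamma_L gp gm)
       \<and> Gamma_L gp gm \<le> 2/3 * (2 * Gamma_T gp gm gz + Gamma_L gp gm)
       \<and> 4 * Gamma_T gp gm gz \<ge> Gamma_L gp gm"
proof -
  let ?T = "Gamma_T gp gm gz" and ?\<phi> = "exp_integral (- (gp + gm))"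
  note bounds = Ldag_schwarz_population_bounds[OF assms[rule_format]]
  have "?\<phi> 1 > 0"
    by (simp add: exp_integral_pos)
  then have "0 \<le> gp" "0 \<le> gm"
    using bounds(1,3)[of 1] by (simp_all add: zero_le_mult_iff)
  moreover have "gp \<le> 2 * ?T" "gm \<le> 2 * ?T"
    using rate_le_of_exp_bound[OF exp_integral_zero has_real_derivative_exp_integral]
      bounds(2,4)[OF less_imp_le] by blast+
  ultimately show ?thesis
    unfolding Gamma_L_def by (intro conjI; simp add: field_simps; linarith)
qed

end
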